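(* Let $n\ge 3$, and let $\psi$ be either $\sinh$ (with $R>0$) or $\sin$ (with $0<R<\pi$). Set $K_\psi=-1$ if $\psi=\sinh$ and $K_\psi=1$ if $\psi=\sin$, let $\phi(r):=\int_0^r\psi(s)\,ds$ for $r\in(0,R)$, and $$H_{n,\psi}:=\frac14\left(\Big(\sup_{(0,R)}\frac{\phi}{\psi}\Big)^{-2}-n(n-2)K_\psi\right).$$ Then for every radial function $\xi\in C^1_0(\mathcal{B}_R)$ (viewed as a function of $r\in[0,R]$), $$\int_0^R\psi^{n-1}\xi_r^2\,dr\ \ge\ \frac{(n-2)^2}{4}\int_0^R\psi^{n-1}\frac{\xi^2}{\psi^2}\,dr+H_{n,\psi}\int_0^R\psi^{n-1}\xi^2\,dr.$$ Moreover, if $\psi=\sinh$, or if $\psi=\sin$ and $R<R_0:=\sup\{s\in(0,\pi/2):\frac{\sin^2 s}{(1-\cos s)^2}>n(n-2)\}$, then $H_{n,\psi}>0$, and in particular $$\int_0^R\psi^{n-1}\xi_r^2\,dr\ \ge\ \frac{(n-2)^2}{4}\int_0^R\psi^{n-1}\frac{\xi^2}{\psi^2}\,dr\quad\text{for all radial }\xi\in C^1_0(\mathcal{B}_R).$$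
   Context: $\mathcal{B}_R$ is the geodesic ball of radius $R$ centered at the pole in the Riemannian model with metric $ds^2=dr^2+\psi(r)^2\,d\Theta^2$ (hyperbolic space $\mathbb{H}^n$ for $\psi=\sinh$, elliptic space $\mathbb{S}^n$ for $\psi=\sin$); $r$ is the geodesic distance to the center. *)

theory Defs
  imports "HOL-Analysis.Analysis"
begin

text \<open>A radial function xi in C^1_0(B_R), described by its radial profile
  f : [0,R] -> real (xi(x) = f(r(x))) together with its derivative f' = xi_r.
  C^1 radial on the ball means: f is C^1 on [0,R) (one-sided at 0) with
  f'(0) = 0; compact support in the open ball means f vanishes near r = R.\<close>
definition radial_C1_0 :: "real \<Rightarrow> (real \<Rightarrow> real) \<Rightarrow> (real \<Rightarrow> real) \<Rightarrow> bool" where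
  "radial_C1_0 R f f' \<longleftrightarrow>
     (\<forall>r\<in>{0..R}. (f has_real_derivative f' r) (at r within {0..R})) \<and>
     continuous_on {0..R} f' \<and> f' 0 = 0 \<and>
     (\<exists>\<delta>>0. \<forall>r\<in>{R-\<delta>..R}. f r = 0)"

definition phi_fun :: "(real \<Rightarrow> real) \<Rightarrow> real \<Rightarrow> real" where
  "phi_fun psi r = integral {0..r} psi"

definition H_const :: "nat \<Rightarrow> (real \<Rightarrow> real) \<Rightarrow> real \<Rightarrow> real \<Rightarrow> real" where
  "H_const n psi K R =
     (1/4) * (inverse ((SUP r\<in>{0<..<R}. phi_fun psi r / psi r) ^ 2)
              - real n * (real n - 2) * K)"

definition R0_const :: "nat \<Rightarrow> real" where
  "R0_const n = Sup {s \<in> {0<..<pi/2}. (sin s)^2 / (1 - cos s)^2 > real n * (real n - 2)}"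

end

theory Submission imports Defs begin

text \<open>Write \<open>\<phi>\<close> for the primitive of \<open>\<psi>\<close>, \<open>a = (n-2)/2\<close>, \<open>c = 1/(2S\<^sup>2)\<close> with
  \<open>\<phi> \<le> S\<psi>\<close>, and \<open>G = \<psi>\<^sup>n\<^sup>-\<^sup>2 (a\<psi>' + c\<phi>)\<close>. Completing the square,
  \<open>\<psi>\<^sup>n\<^sup>-\<^sup>1 \<xi>'\<^sup>2 + (G \<xi>\<^sup>2)' = \<psi>\<^sup>n\<^sup>-\<^sup>3 (\<psi>\<xi>' + (a\<psi>' + c\<phi>)\<xi>)\<^sup>2 + (G' - \<psi>\<^sup>n\<^sup>-\<^sup>3 (a\<psi>' + c\<phi>)\<^sup>2) \<xi>\<^sup>2\<close>,
  and the model identities \<open>\<psi>'' = -K\<psi>\<close>, \<open>\<psi>'\<^sup>2 = 1 - K\<psi>\<^sup>2\<close> reduce the last coefficient to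
  \<open>a\<^sup>2 \<psi>\<^sup>n\<^sup>-\<^sup>3 + H \<psi>\<^sup>n\<^sup>-\<^sup>1 + \<psi>\<^sup>n\<^sup>-\<^sup>3 (c\<psi>\<^sup>2/2 - c\<^sup>2\<phi>\<^sup>2)\<close>, whose last term is nonnegative
  because \<open>\<phi> \<le> S\<psi>\<close>. Integrating over \<open>[0,R]\<close>, the exact derivative \<open>(G \<xi>\<^sup>2)'\<close> drops out since
  \<open>G(0) = 0\<close> and \<open>\<xi>(R) = 0\<close>. Positivity of \<open>H\<close> is clear for \<open>\<psi> = sinh\<close>; for \<open>\<psi> = sin\<close> one has
  \<open>\<phi>/\<psi> = tan(r/2)\<close>, so \<open>H > 0\<close> as soon as \<open>n(n-2) tan\<^sup>2(R/2) < 1\<close>, which is what \<open>R < R\<^sub>0\<close> says.\<close>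

lemma hardy_pointwise:
  fixes n :: nat and S K p dp ph x y :: real
  assumes n: "n \<ge> 3" and pyth: "dp^2 = 1 - K * p^2"
    and p: "0 \<le> p" and ph: "0 \<le> ph" "ph \<le> S * p"
  defines "a \<equiv> (real n - 2) / 2" and "c \<equiv> inverse (S^2) / 2"
  defines "A \<equiv> a * dp + c * ph"
  shows "(real n - 2)^2 / 4 * p^(n-3) * x^2
           + 1/4 * (inverse (S^2) - real n * (real n - 2) * K) * p^(n-1) * x^2
         \<le> p^(n-1) * y^2
           + (real (n-2) * p^(n-3) * dp * A + p^(n-2) * (c - a * K) * p) * x^2
           + p^(n-2) * A * (2 * x * y)"
proof -
  obtain k where k: "n = k + 3" using n by (metis add.commute le_Suc_ex)
  have real_n2: "real (n-2) = 2 * a" unfolding a_def using n by simp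
  have a2: "(real n - 2)^2 / 4 = a^2" unfolding a_def by (simp add: power_divide)
  have H: "1/4 * (inverse (S^2) - real n * (real n - 2) * K) = c / 2 - K * (a^2 + a)"
    unfolding a_def c_def by (simp add: field_simps power2_eq_square)
  have pw: "p^(n-1) = p^k * p^2" "p^(n-2) = p^k * p" "p^(n-3) = p^k"
    unfolding k by (simp_all add: power_add numeral_3_eq_3 power2_eq_square)
  have "c^2 * ph^2 \<le> c^2 * (S * p)^2"
    using ph by (intro mult_left_mono power_mono) auto
  also have "\<dots> = c * p^2 / 2"
    unfolding c_def by (cases "S = 0") (simp_all add: field_simps power2_eq_square)
  finally have slack: "0 \<le> c * p^2 / 2 - c^2 * ph^2" by simp
  have "p^(n-1) * y^2 + (real (n-2) * p^(n-3) * dp * A + p^(n-2) * (c - a * K) * p) * x^2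
           + p^(n-2) * A * (2 * x * y)
        - ((real n - 2)^2 / 4 * p^(n-3) * x^2
           + 1/4 * (inverse (S^2) - real n * (real n - 2) * K) * p^(n-1) * x^2)
      = p^k * (p * y + A * x)^2 + p^k * x^2 * (c * p^2 / 2 - c^2 * ph^2)
        + p^k * x^2 * a^2 * (dp^2 - (1 - K * p^2))"
    unfolding pw real_n2 A_def a2 H by (simp add: algebra_simps power2_eq_square)
  also have "\<dots> \<ge> 0" using pyth p slack by simp
  finally show ?thesis by simp
qed

lemma integral_le_by_null_derivative:
  fixes u v w W :: "real \<Rightarrow> real"
  assumes "a \<le> b" and "continuous_on {a..b} u" and "continuous_on {a..b} v"
    and "\<And>x. x \<in> {a..b} \<Longrightarrow> (W has_real_derivative w x) (at x within {a..b})"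
    and "W a = W b"
    and "\<And>x. x \<in> {a..b} \<Longrightarrow> v x \<le> u x + w x"
  shows "integral {a..b} v \<le> integral {a..b} u"
proof -
  have "(w has_integral W b - W a) {a..b}"
    using assms(1,4) by (intro fundamental_theorem_of_calculus)
      (auto simp: has_real_derivative_iff_has_vector_derivative[symmetric])
  then have uw: "((\<lambda>x. u x + w x) has_integral integral {a..b} u) {a..b}"
    using assms(2,5) integrable_continuous_interval
    by (metis add.right_neutral diff_self has_integral_add integrable_integral)
  have v: "(v has_integral integral {a..b} v) {a..b}"
    using assms(3) integrable_continuous_interval by blast
  show ?thesis by (rule has_integral_le[OF v uw assms(6)])
qed

lemma model_hardy_inequality:
  fixes n :: nat and R S K :: real and psi dpsi phi f f' :: "real \<Rightarrow> real"
  assumes n: "n \<ge> 3" and R: "R > 0"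
    and dpsi: "\<And>r. (psi has_real_derivative dpsi r) (at r)"
    and ddpsi: "\<And>r. (dpsi has_real_derivative - K * psi r) (at r)"
    and pyth: "\<And>r. (dpsi r)^2 = 1 - K * (psi r)^2"
    and psi0: "psi 0 = 0" and psi_pos: "\<And>r. r \<in> {0<..R} \<Longrightarrow> psi r > 0"
    and dphi: "\<And>r. (phi has_real_derivative psi r) (at r)"
    and phi_bounds: "\<And>r. r \<in> {0..<R} \<Longrightarrow> 0 \<le> phi r \<and> phi r \<le> S * psi r"
    and f: "radial_C1_0 R f f'"
  shows "(real n - 2)^2 / 4 * integral {0..R} (\<lambda>r. psi r ^ (n-1) * ((f r)^2 / (psi r)^2))
           + 1/4 * (inverse (S^2) - real n * (real n - 2) * K) * integral {0..R} (\<lambda>r. psi r ^ (n-1) * (f r)^2)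
         \<le> integral {0..R} (\<lambda>r. psi r ^ (n-1) * (f' r)^2)"
proof -
  from f have df: "\<And>r. r \<in> {0..R} \<Longrightarrow> (f has_real_derivative f' r) (at r within {0..R})"
    and cf': "continuous_on {0..R} f'" and fR: "f R = 0"
    unfolding radial_C1_0_def by fastforce+
  have cf: "continuous_on {0..R} f" using df by (rule DERIV_continuous_on)
  have cpsi: "continuous_on {0..R} psi"
    by (intro continuous_at_imp_continuous_on ballI DERIV_isCont[OF dpsi])
  have psi_nonneg: "0 \<le> psi r" if "r \<in> {0..R}" for r
    using that psi0 psi_pos by (cases "r = 0") (auto intro: less_imp_le)
  define a where "a = (real n - 2) / 2"
  define c where "c = inverse (S^2) / 2"
  define A where "A r = a * dpsi r + c * phi r" for r
  define G where "G r = psi r ^ (n-2) * A r" for r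
  define G' where "G' r = real (n-2) * psi r ^ (n-3) * dpsi r * A r + psi r ^ (n-2) * (c - a * K) * psi r" for r
  have dG: "(G has_real_derivative G' r) (at r)" for r
  proof -
    have "n - 2 - 1 = n - 3" by simp
    then show ?thesis unfolding G_def G'_def A_def
      by (auto intro!: derivative_eq_intros dpsi ddpsi dphi simp: algebra_simps)
  qed
  let ?I = "\<lambda>k. integral {0..R} (\<lambda>r. psi r ^ k * (f r)^2)"
  have weight_integrable: "(\<lambda>r. psi r ^ k * (f r)^2) integrable_on {0..R}" for k
    by (intro integrable_continuous_interval continuous_intros cpsi cf)
  have "integral {0..R} (\<lambda>r. (real n - 2)^2 / 4 * (psi r ^ (n-3) * (f r)^2)
           + 1/4 * (inverse (S^2) - real n * (real n - 2) * K) * (psi r ^ (n-1) * (f r)^2))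
        \<le> integral {0..R} (\<lambda>r. psi r ^ (n-1) * (f' r)^2)"
  proof (rule integral_le_by_null_derivative)
    show "((\<lambda>r. G r * (f r)^2) has_real_derivative G' r * (f r)^2 + G r * (2 * f r * f' r))
            (at r within {0..R})" if "r \<in> {0..R}" for r
      by (auto intro!: derivative_eq_intros has_field_derivative_at_within[OF dG] df[OF that])
    show "G 0 * (f 0)^2 = G R * (f R)^2" unfolding G_def using psi0 n fR by simp
    show "(real n - 2)^2 / 4 * (psi r ^ (n-3) * (f r)^2)
            + 1/4 * (inverse (S^2) - real n * (real n - 2) * K) * (psi r ^ (n-1) * (f r)^2)
          \<le> psi r ^ (n-1) * (f' r)^2 + (G' r * (f r)^2 + G r * (2 * f r * f' r))"
      if r: "r \<in> {0..R}" for r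
    proof (cases "r = R")
      case False
      with r have "r \<in> {0..<R}" by auto
      from hardy_pointwise[OF n pyth psi_nonneg[OF r] phi_bounds[OF this, THEN conjunct1]
          phi_bounds[OF this, THEN conjunct2], of "f r" "f' r"]
      show ?thesis unfolding G_def G'_def A_def a_def c_def by (simp add: algebra_simps)
    qed (use fR psi_nonneg[OF r] in simp)
  qed (fact less_imp_le[OF R] | intro continuous_intros cpsi cf cf')+
  moreover have "integral {0..R} (\<lambda>r. (real n - 2)^2 / 4 * (psi r ^ (n-3) * (f r)^2)
           + 1/4 * (inverse (S^2) - real n * (real n - 2) * K) * (psi r ^ (n-1) * (f r)^2))
        = (real n - 2)^2 / 4 * ?I (n-3) + 1/4 * (inverse (S^2) - real n * (real n - 2) * K) * ?I (n-1)"
    by (subst integral_add[OF integrable_on_mult_right[OF weight_integrable] integrable_on_mult_right[OF weight_integrable]]) simp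
  moreover have "integral {0..R} (\<lambda>r. psi r ^ (n-1) * ((f r)^2 / (psi r)^2)) = ?I (n-3)"
  proof (rule integral_spike[of "{0}"])
    fix r assume "r \<in> {0..R} - {0}"
    then have "psi r > 0" using psi_pos by auto
    moreover have "n - 1 = (n - 3) + 2" using n by simp
    ultimately show "psi r ^ (n-3) * (f r)^2 = psi r ^ (n-1) * ((f r)^2 / (psi r)^2)"
      by (simp add: power_add power2_eq_square field_simps)
  qed simp
  ultimately show ?thesis by simp
qed

lemma phi_fun_eq_antiderivative:
  assumes "r \<ge> 0" and "\<And>x. (Phi has_real_derivative psi x) (at x)"
  shows "phi_fun psi r = Phi r - Phi 0"
  unfolding phi_fun_def
proof (rule integral_unique, rule fundamental_theorem_of_calculus)
  fix x show "(Phi has_vector_derivative psi x) (at x within {0..r})"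
    using has_field_derivative_at_within[OF assms(2)]
    by (simp add: has_real_derivative_iff_has_vector_derivative[symmetric])
qed (use assms in simp)

lemma phi_fun_sinh:
  assumes "r \<ge> 0" shows "phi_fun sinh r = cosh r - 1"
proof -
  have "(cosh has_real_derivative sinh x) (at x)" for x
    by (auto intro!: derivative_eq_intros)
  then show ?thesis using phi_fun_eq_antiderivative[OF assms, of cosh sinh] by simp
qed

lemma phi_fun_sin:
  assumes "r \<ge> 0" shows "phi_fun sin r = 1 - cos r"
proof -
  have "((\<lambda>x. - cos x) has_real_derivative sin x) (at x)" for x
    by (auto intro!: derivative_eq_intros)
  then show ?thesis using phi_fun_eq_antiderivative[OF assms, of "\<lambda>x. - cos x" sin] by simp
qed

lemma phi_fun_le_SUP_ratio:
  assumes "bdd_above ((\<lambda>r. phi_fun psi r / psi r) ` {0<..<R})" and "r \<in> {0<..<R}" and "psi r > 0"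
  shows "phi_fun psi r \<le> (SUP r\<in>{0<..<R}. phi_fun psi r / psi r) * psi r"
  using cSUP_upper[OF assms(2,1)] assms(3) by (simp add: field_simps)

lemma tan_half_angle:
  assumes "0 < s" and "s < pi"
  shows "(1 - cos s) / sin s = tan (s/2)"
proof -
  define t where "t = s/2"
  have s: "s = 2*t" unfolding t_def by simp
  have t: "0 < t" "t < pi/2" using assms unfolding t_def by auto
  have "sin t > 0" using t by (intro sin_gt_zero) auto
  moreover have "cos t > 0" using t by (intro cos_gt_zero) auto
  ultimately show ?thesis unfolding s t_def[symmetric] cos_double_sin sin_double
    by (simp add: tan_def field_simps power2_eq_square)
qed

lemma hardy_sinh:
  assumes n: "n \<ge> 3" and R: "R > 0" and f: "radial_C1_0 R f f'"
  shows "(real n - 2)^2 / 4 * integral {0..R} (\<lambda>r. sinh r ^ (n-1) * ((f r)^2 / (sinh r)^2))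
           + H_const n sinh (-1) R * integral {0..R} (\<lambda>r. sinh r ^ (n-1) * (f r)^2)
         \<le> integral {0..R} (\<lambda>r. sinh r ^ (n-1) * (f' r)^2)"
proof -
  define S where "S = (SUP r\<in>{0<..<R}. phi_fun sinh r / sinh r)"
  have "(cosh r - 1) / sinh r \<le> 1" if "r > 0" for r :: real
    using that cosh_minus_sinh[of r] by (simp add: field_simps)
  then have "bdd_above ((\<lambda>r. phi_fun sinh r / sinh r) ` {0<..<R})"
    by (intro bdd_aboveI2[of _ _ 1]) (simp add: phi_fun_sinh)
  then have "cosh r - 1 \<le> S * sinh r" if "r \<in> {0..<R}" for r
    using that phi_fun_le_SUP_ratio[of sinh R r] unfolding S_def
    by (cases "r = 0") (auto simp: phi_fun_sinh)
  then show ?thesis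
    unfolding H_const_def S_def[symmetric]
    by (intro model_hardy_inequality[OF n R _ _ _ _ _ _ _ f, where dpsi = cosh and phi = "\<lambda>r. cosh r - 1"])
      (auto intro!: derivative_eq_intros simp: cosh_square_eq cosh_real_ge_1)
qed

lemma hardy_sin:
  assumes n: "n \<ge> 3" and R: "0 < R" "R < pi" and f: "radial_C1_0 R f f'"
  shows "(real n - 2)^2 / 4 * integral {0..R} (\<lambda>r. sin r ^ (n-1) * ((f r)^2 / (sin r)^2))
           + H_const n sin 1 R * integral {0..R} (\<lambda>r. sin r ^ (n-1) * (f r)^2)
         \<le> integral {0..R} (\<lambda>r. sin r ^ (n-1) * (f' r)^2)"
proof -
  define S where "S = (SUP r\<in>{0<..<R}. phi_fun sin r / sin r)"
  have "phi_fun sin r / sin r \<le> tan (R/2)" if "r \<in> {0<..<R}" for r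
    using that R by (auto simp: phi_fun_sin tan_half_angle intro!: less_imp_le tan_monotone)
  then have "bdd_above ((\<lambda>r. phi_fun sin r / sin r) ` {0<..<R})"
    by (rule bdd_aboveI2)
  then have "1 - cos r \<le> S * sin r" if "r \<in> {0..<R}" for r
    using that R phi_fun_le_SUP_ratio[of sin R r] sin_gt_zero[of r] unfolding S_def
    by (cases "r = 0") (auto simp: phi_fun_sin)
  then show ?thesis
    unfolding H_const_def S_def[symmetric]
    by (intro model_hardy_inequality[OF n R(1) _ _ _ _ _ _ _ f, where dpsi = cos and phi = "\<lambda>r. 1 - cos r"])
      (use R in \<open>auto intro!: derivative_eq_intros sin_gt_zero simp: cos_squared_eq\<close>)
qed

lemma sin_sq_over_one_minus_cos_sq:
  assumes "0 < s" and "s < pi"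
  shows "(sin s)^2 / (1 - cos s)^2 = inverse ((tan (s/2))^2)"
  using tan_half_angle[OF assms] by (metis inverse_divide power_divide)

lemma tan_half_bound_of_less_R0_const:
  assumes n: "n \<ge> 3" and R: "0 < R" and "R < R0_const n"
  shows "R < pi/2" and "real n * (real n - 2) * (tan (R/2))^2 < 1"
proof -
  define N where "N = real n * (real n - 2)"
  have N: "N > 0" unfolding N_def using n by simp
  define X where "X = {s \<in> {0<..<pi/2}. (sin s)^2 / (1 - cos s)^2 > N}"
  have bdd: "bdd_above X" unfolding X_def by (intro bdd_aboveI[of _ "pi/2"]) auto
  have "X \<noteq> {}"
  proof -
    have "isCont tan 0" by (simp add: isCont_tan)
    then have "(tan \<longlongrightarrow> 0) (at_right 0)"
      unfolding isCont_def by (auto intro: tendsto_mono[OF at_within_le_at])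
    then have "((\<lambda>t. N * (tan t)^2) \<longlongrightarrow> N * 0^2) (at_right 0)"
      by (intro tendsto_intros)
    then have "\<forall>\<^sub>F t in at_right 0. N * (tan t)^2 < 1"
      by (intro order_tendstoD(2)) auto
    moreover have "\<forall>\<^sub>F t in at_right 0. 0 < t \<and> t < pi/4"
      unfolding eventually_at_right_field by (intro exI[of _ "pi/4"]) auto
    ultimately have "\<forall>\<^sub>F t in at_right 0. N * (tan t)^2 < 1 \<and> 0 < t \<and> t < pi/4"
      by (rule eventually_conj)
    then obtain t where t: "N * (tan t)^2 < 1" "0 < t" "t < pi/4"
      using eventually_happens trivial_limit_at_right_real by blast
    have "tan t > 0" using t by (intro tan_gt_zero) auto
    then have "N < inverse ((tan t)^2)" using t by (simp add: field_simps)
    then have "N < (sin (2*t))^2 / (1 - cos (2*t))^2"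
      using t sin_sq_over_one_minus_cos_sq[of "2*t"] by simp
    then have "2*t \<in> X" unfolding X_def using t by auto
    then show ?thesis by auto
  qed
  moreover have "R < Sup X" using assms(3) unfolding R0_const_def X_def N_def .
  ultimately obtain s where s: "s \<in> X" "R < s" using less_cSup_iff[OF _ bdd] by auto
  then have s': "0 < s" "s < pi/2" "N < inverse ((tan (s/2))^2)"
    unfolding X_def using sin_sq_over_one_minus_cos_sq[of s] by auto
  show "R < pi/2" using s s' by simp
  have "0 < tan (R/2)" using R s s' by (intro tan_gt_zero) auto
  moreover have "tan (R/2) < tan (s/2)" using R s s' by (intro tan_monotone) auto
  ultimately have "N * (tan (R/2))^2 < N * (tan (s/2))^2"
    using N by (intro mult_strict_left_mono power_strict_mono) auto
  also have "\<dots> < 1" using s'(3) \<open>0 < tan (R/2)\<close> \<open>tan (R/2) < tan (s/2)\<close>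
    by (simp add: field_simps)
  finally show "real n * (real n - 2) * (tan (R/2))^2 < 1" unfolding N_def .
qed

lemma H_const_sinh_pos: "n \<ge> 3 \<Longrightarrow> H_const n sinh (-1) R > 0"
  unfolding H_const_def by (simp add: add_nonneg_pos)

lemma H_const_sin_pos:
  assumes n: "n \<ge> 3" and R: "0 < R" "R < R0_const n"
  shows "H_const n sin 1 R > 0"
proof -
  define S where "S = (SUP r\<in>{0<..<R}. phi_fun sin r / sin r)"
  have "R < pi/2" and tan_R: "real n * (real n - 2) * (tan (R/2))^2 < 1"
    using tan_half_bound_of_less_R0_const[OF n R] by auto
  then have ratio: "phi_fun sin r / sin r = tan (r/2)" if "r \<in> {0<..<R}" for r
    using that by (simp add: phi_fun_sin tan_half_angle)
  have bdd: "bdd_above ((\<lambda>r. phi_fun sin r / sin r) ` {0<..<R})"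
    using R \<open>R < pi/2\<close> by (intro bdd_aboveI2[of _ _ "tan (R/2)"]) (auto simp: ratio intro!: less_imp_le tan_monotone)
  have half: "R/2 \<in> {0<..<R}" using R by simp
  then have "phi_fun sin (R/2) / sin (R/2) \<le> S"
    unfolding S_def by (rule cSUP_upper[OF _ bdd])
  then have S_pos: "0 < S" using ratio[OF half] R \<open>R < pi/2\<close> tan_gt_zero[of "R/4"] by simp
  have "S \<le> tan (R/2)"
    using R \<open>R < pi/2\<close> unfolding S_def by (intro cSUP_least) (auto simp: ratio intro!: less_imp_le tan_monotone)
  then have "real n * (real n - 2) * S^2 \<le> real n * (real n - 2) * (tan (R/2))^2"
    using S_pos n by (intro mult_left_mono power_mono) auto
  with tan_R have "real n * (real n - 2) * S^2 < 1" by simp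
  then show ?thesis
    using S_pos unfolding H_const_def S_def[symmetric] by (simp add: field_simps)
qed

theorem proposition1p8:
  fixes n :: nat and R K :: real and psi :: "real \<Rightarrow> real"
  assumes "n \<ge> 3"
    and "(psi = sinh \<and> K = -1 \<and> R > 0) \<or> (psi = sin \<and> K = 1 \<and> 0 < R \<and> R < pi)"
  shows "(\<forall>f f'. radial_C1_0 R f f' \<longrightarrow>
            integral {0..R} (\<lambda>r. psi r ^ (n-1) * (f' r)^2)
            \<ge> (real n - 2)^2 / 4 * integral {0..R} (\<lambda>r. psi r ^ (n-1) * ((f r)^2 / (psi r)^2))
              + H_const n psi K R * integral {0..R} (\<lambda>r. psi r ^ (n-1) * (f r)^2))
       \<and> ((psi = sinh \<or> (psi = sin \<and> R < R0_const n)) \<longrightarrow>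
            H_const n psi K R > 0 \<and>
            (\<forall>f f'. radial_C1_0 R f f' \<longrightarrow>
              integral {0..R} (\<lambda>r. psi r ^ (n-1) * (f' r)^2)
              \<ge> (real n - 2)^2 / 4 * integral {0..R} (\<lambda>r. psi r ^ (n-1) * ((f r)^2 / (psi r)^2))))"
proof -
  have "sinh pi \<noteq> sin (pi :: real)" by simp
  then have sinh_ne_sin: "(sinh :: real \<Rightarrow> real) \<noteq> sin" by metis
  have hardy: "\<forall>f f'. radial_C1_0 R f f' \<longrightarrow>
            integral {0..R} (\<lambda>r. psi r ^ (n-1) * (f' r)^2)
            \<ge> (real n - 2)^2 / 4 * integral {0..R} (\<lambda>r. psi r ^ (n-1) * ((f r)^2 / (psi r)^2))
              + H_const n psi K R * integral {0..R} (\<lambda>r. psi r ^ (n-1) * (f r)^2)"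
    using assms hardy_sinh hardy_sin by auto
  moreover have "H_const n psi K R > 0" if "psi = sinh \<or> (psi = sin \<and> R < R0_const n)"
    using that assms sinh_ne_sin H_const_sinh_pos H_const_sin_pos by auto
  moreover have "0 \<le> integral {0..R} (\<lambda>r. psi r ^ (n-1) * (f r)^2)" for f :: "real \<Rightarrow> real"
  proof -
    have "0 \<le> psi r" if "r \<in> {0..R}" for r
      using assms(2) that by (auto intro: sin_ge_zero)
    then show ?thesis
      by (cases "(\<lambda>r. psi r ^ (n-1) * (f r)^2) integrable_on {0..R}")
        (auto intro!: integral_nonneg simp: not_integrable_integral)
  qed
  ultimately show ?thesis
    by (smt (verit) mult_nonneg_nonneg)
qed

end
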